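(* The assignment of the function $\mathsf{h}:G_C[l]\rightarrow G_W[l]$ given by $\mathsf{h}(H,\varrho)=(H,\mu_{(H,\varrho)})$ with $(H,\varrho)\in G_C[l]$ to each $l\in\mathbb{N}$ defines a morphism $\mathsf{h}\in\mathrm{Hom}_{\underline{\rm GM}_\Omega}(G_C\Omega,G_W\Omega)$ of the graded $\Omega$ monads $G_C\Omega$, $G_W\Omega$.
   Context: $\Omega$ is the category of finite ordinals $[l]=\{0,\dots,l-1\}$ and all functions. $G[l]$ is the set of hypergraphs on $[l]$, $Gf(H)=\{f(X)\mid X\in H\}$, $H\smile K=H\cup(K+l)$, $O=\emptyset$. Fix finite additive commutative monoids $\mathsf{A}$, $\mathsf{M}$. $G_C\Omega$ is the calibrated hypergraph graded $\Omega$ monad: $G_C[l]=\{(H,\varrho)\}$ where $\varrho$ assigns to each hyperedge $X$ a function $\varrho_X:\mathsf{A}^X\to\mathsf{M}$; $G_Cf(H,\varrho)=(Gf(H),f_{H*}(\varrho))$ with $f_{H*}(\varrho)_Y=\sum_{X\in H,f(X)=Y}f|_{X*}(\varrho_X)$, $f_*(\varpi)(v)=\sum_{f_\star(w)=v}\varpi(w)$, $f_\star(w)(s)=\sum_{f(r)=s}w(r)$; product $(H,\varrho)\smile(K,\varsigma)=(H\smile K,\varrho\smile\varsigma)$, unit $(O,\varepsilon)$. $G_W\Omega$ is the weighted hypergraph graded $\Omega$ monad: $G_W[l]=\{(H,\alpha)\mid H\in G[l],\alpha\in\mathsf{M}^H\}$, $G_Wf(H,\alpha)=(Gf(H),f_{H*}(\alpha))$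 with $f_{H*}(\alpha)_Y=\sum_{X\in H,f(X)=Y}\alpha_X$, product $(H,\alpha)\smile(K,\beta)=(H\smile K,\alpha\smile\beta)$ where $(\alpha\smile\beta)_X=\alpha_X$ for $X\in H$, $\beta_{X-l}$ for $X\in K+l$, unit $(O,\upsilon)$, $\upsilon=0_\emptyset$. The weight function of $(H,\varrho)$ is $\mu_{(H,\varrho)X}=\sum_{w\in\mathsf{A}^X}\varrho_X(w)$. A morphism of graded $\Omega$ monads is a collection of functions $\mathsf{m}:D[l]\to E[l]$ with $\mathsf{m}\circ Df=Ef\circ\mathsf{m}$, $\mathsf{m}(\lambda\smile\mu)=\mathsf{m}(\lambda)\smile\mathsf{m}(\mu)$, $\mathsf{m}(\iota)=\iota$. *)

theory Defs
  imports Main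
begin

definition hypergraphs :: "nat \<Rightarrow> nat set set set" where
  "hypergraphs l = {H. \<forall>X\<in>H. X \<noteq> {} \<and> X \<subseteq> {..<l}}"

definition Gmap :: "(nat \<Rightarrow> nat) \<Rightarrow> nat set set \<Rightarrow> nat set set" where
  "Gmap f H = (\<lambda>X. f ` X) ` H"

definition shiftE :: "nat \<Rightarrow> nat set \<Rightarrow> nat set" where
  "shiftE l X = (\<lambda>x. x + l) ` X"

definition unshiftE :: "nat \<Rightarrow> nat set \<Rightarrow> nat set" where
  "unshiftE l X = (\<lambda>x. x - l) ` X"

definition Gcup :: "nat \<Rightarrow> nat set set \<Rightarrow> nat set set \<Rightarrow> nat set set" where
  "Gcup l H K = H \<union> shiftE l ` K"

section \<open>A^X: functions X -> A, represented canonically (value 0 outside X)\<close>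

definition Afun :: "nat set \<Rightarrow> (nat \<Rightarrow> 'a::zero) set" where
  "Afun X = {w. \<forall>r. r \<notin> X \<longrightarrow> w r = 0}"

definition fstar :: "(nat \<Rightarrow> nat) \<Rightarrow> nat set \<Rightarrow> (nat \<Rightarrow> 'a::comm_monoid_add) \<Rightarrow> nat \<Rightarrow> 'a" where
  "fstar f X w = (\<lambda>s. \<Sum>r\<in>{r\<in>X. f r = s}. w r)"

definition fpush :: "(nat \<Rightarrow> nat) \<Rightarrow> nat set \<Rightarrow> ((nat \<Rightarrow> 'a::comm_monoid_add) \<Rightarrow> 'm::comm_monoid_add)
    \<Rightarrow> (nat \<Rightarrow> 'a) \<Rightarrow> 'm" where
  "fpush f X \<pi> = (\<lambda>v. \<Sum>w\<in>{w\<in>Afun X. fstar f X w = v}. \<pi> w)"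

type_synonym ('a,'m) calib = "nat set \<Rightarrow> (nat \<Rightarrow> 'a) \<Rightarrow> 'm"

text \<open>Elements (H, rho) with rho_X : A^X -> M for X in H; canonically rho is 0 elsewhere.\<close>
definition GC :: "nat \<Rightarrow> (nat set set \<times> ('a::comm_monoid_add,'m::comm_monoid_add) calib) set" where
  "GC l = {(H, \<rho>). H \<in> hypergraphs l \<and>
      (\<forall>X w. (X \<notin> H \<or> w \<notin> Afun X) \<longrightarrow> \<rho> X w = 0)}"

definition GCmap :: "(nat \<Rightarrow> nat) \<Rightarrow> nat set set \<times> ('a::comm_monoid_add,'m::comm_monoid_add) calib
    \<Rightarrow> nat set set \<times> ('a,'m) calib" where
  "GCmap f = (\<lambda>(H, \<rho>). (Gmap f H,
      (\<lambda>Y v. \<Sum>X\<in>{X\<in>H. f ` X = Y}. fpush f X (\<rho> X) v)))"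

definition GCprod :: "nat \<Rightarrow> nat set set \<times> ('a::comm_monoid_add,'m::comm_monoid_add) calib
    \<Rightarrow> nat set set \<times> ('a,'m) calib \<Rightarrow> nat set set \<times> ('a,'m) calib" where
  "GCprod l = (\<lambda>(H, \<rho>) (K, \<sigma>). (Gcup l H K,
      (\<lambda>X w. if X \<in> H then \<rho> X w
             else if X \<in> shiftE l ` K \<and> w \<in> Afun X then \<sigma> (unshiftE l X) (\<lambda>r. w (r + l))
             else 0)))"

definition GCunit :: "nat set set \<times> ('a::comm_monoid_add,'m::comm_monoid_add) calib" where
  "GCunit = ({}, (\<lambda>_ _. 0))"

definition GW :: "nat \<Rightarrow> (nat set set \<times> (nat set \<Rightarrow> 'm::comm_monoid_add)) set" where
  "GW l = {(H, \<alpha>). H \<in> hypergraphs l \<and> (\<forall>X. X \<notin> H \<longrightarrow> \<alpha> X = 0)}"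

definition GWmap :: "(nat \<Rightarrow> nat) \<Rightarrow> nat set set \<times> (nat set \<Rightarrow> 'm::comm_monoid_add)
    \<Rightarrow> nat set set \<times> (nat set \<Rightarrow> 'm)" where
  "GWmap f = (\<lambda>(H, \<alpha>). (Gmap f H, (\<lambda>Y. \<Sum>X\<in>{X\<in>H. f ` X = Y}. \<alpha> X)))"

definition GWprod :: "nat \<Rightarrow> nat set set \<times> (nat set \<Rightarrow> 'm::comm_monoid_add)
    \<Rightarrow> nat set set \<times> (nat set \<Rightarrow> 'm) \<Rightarrow> nat set set \<times> (nat set \<Rightarrow> 'm)" where
  "GWprod l = (\<lambda>(H, \<alpha>) (K, \<beta>). (Gcup l H K,
      (\<lambda>X. if X \<in> H then \<alpha> X else if X \<in> shiftE l ` K then \<beta> (unshiftE l X) else 0)))"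

definition GWunit :: "nat set set \<times> (nat set \<Rightarrow> 'm::comm_monoid_add)" where
  "GWunit = ({}, (\<lambda>_. 0))"

definition weight :: "nat set set \<times> ('a::comm_monoid_add,'m::comm_monoid_add) calib \<Rightarrow> nat set \<Rightarrow> 'm" where
  "weight = (\<lambda>(H, \<rho>) X. \<Sum>w\<in>Afun X. \<rho> X w)"

definition hmap :: "nat set set \<times> ('a::comm_monoid_add,'m::comm_monoid_add) calib
    \<Rightarrow> nat set set \<times> (nat set \<Rightarrow> 'm)" where
  "hmap Hr = (fst Hr, weight Hr)"

text \<open>D, E given by carriers D[l], action of Omega-morphisms f:[l]->[k] (functions
  with f ` [l] \<subseteq> [k]), graded product D[l] x D[k] -> D[l+k] (depending on l), and unit in D[0].
  A morphism is a family m_l : D[l] -> E[l] commuting with all structure.\<close>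
definition graded_monad_morphism ::
  "(nat \<Rightarrow> 'x set) \<Rightarrow> ((nat \<Rightarrow> nat) \<Rightarrow> 'x \<Rightarrow> 'x) \<Rightarrow> (nat \<Rightarrow> 'x \<Rightarrow> 'x \<Rightarrow> 'x) \<Rightarrow> 'x \<Rightarrow>
   (nat \<Rightarrow> 'y set) \<Rightarrow> ((nat \<Rightarrow> nat) \<Rightarrow> 'y \<Rightarrow> 'y) \<Rightarrow> (nat \<Rightarrow> 'y \<Rightarrow> 'y \<Rightarrow> 'y) \<Rightarrow> 'y \<Rightarrow>
   (nat \<Rightarrow> 'x \<Rightarrow> 'y) \<Rightarrow> bool" where
  "graded_monad_morphism D Df Dp Du E Ef Ep Eu m \<longleftrightarrow>
     (\<forall>l. \<forall>x\<in>D l. m l x \<in> E l) \<and>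
     (\<forall>l k f. f ` {..<l} \<subseteq> {..<k} \<longrightarrow> (\<forall>x\<in>D l. m k (Df f x) = Ef f (m l x))) \<and>
     (\<forall>l k. \<forall>x\<in>D l. \<forall>y\<in>D k. m (l + k) (Dp l x y) = Ep l (m l x) (m k y)) \<and>
     m 0 Du = Eu"

end

theory Submission
  imports Defs "HOL-Library.FuncSet"
begin

text \<open>Push-forward along \<open>f\<close>
  preserves total mass, since summing \<open>f\<^sub>*(\<rho>\<^sub>X)\<close> over \<open>A\<^bsup>f(X)\<^esup>\<close> merely regroups the sum of
  \<open>\<rho>\<^sub>X\<close> over \<open>A\<^bsup>X\<^esup>\<close> by the fibres of \<open>f\<^sub>\<star>\<close>; and translation by \<open>l\<close> is a bijection
  \<open>A\<^bsup>X+l\<^esup> \<cong> A\<^bsup>X\<^esup>\<close>.\<close>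

lemma finite_Afun:
  assumes "finite X"
  shows "finite (Afun X :: (nat \<Rightarrow> 'a::{zero,finite}) set)"
proof -
  let ?extend = "\<lambda>g r. if r \<in> X then g r else 0"
  have "Afun X \<subseteq> ?extend ` (X \<rightarrow>\<^sub>E (UNIV :: 'a set))"
  proof
    fix w :: "nat \<Rightarrow> 'a" assume "w \<in> Afun X"
    then have "w = ?extend (restrict w X)"
      by (auto simp: Afun_def)
    then show "w \<in> ?extend ` (X \<rightarrow>\<^sub>E UNIV)"
      by (intro image_eqI[where x = "restrict w X"]) auto
  qed
  moreover have "finite (X \<rightarrow>\<^sub>E (UNIV :: 'a set))"
    using assms by (intro finite_PiE) auto
  ultimately show ?thesis
    by (meson finite_imageI finite_subset)
qed

lemma fstar_in_Afun: "fstar f X w \<in> Afun (f ` X)"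
  unfolding Afun_def fstar_def by (force intro: sum.neutral)

lemma sum_fpush_Afun:
  fixes \<pi> :: "(nat \<Rightarrow> 'a::{comm_monoid_add,finite}) \<Rightarrow> 'm::comm_monoid_add"
  assumes "finite X"
  shows "(\<Sum>v\<in>Afun (f ` X). fpush f X \<pi> v) = (\<Sum>w\<in>Afun X. \<pi> w)"
  unfolding fpush_def
  using sum.group[OF finite_Afun finite_Afun, of X "f ` X" "fstar f X" \<pi>] assms fstar_in_Afun
  by blast

lemma sum_Afun_shiftE:
  fixes \<sigma> :: "(nat \<Rightarrow> 'a::{comm_monoid_add,finite}) \<Rightarrow> 'm::comm_monoid_add"
  shows "(\<Sum>w\<in>Afun (shiftE l Z). \<sigma> (\<lambda>r. w (r + l))) = (\<Sum>u\<in>Afun Z. \<sigma> u)"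
proof (rule sum.reindex_bij_witness[where i = "\<lambda>u r. if l \<le> r then u (r - l) else 0"
      and j = "\<lambda>w r. w (r + l)"])
  fix w :: "nat \<Rightarrow> 'a" assume w: "w \<in> Afun (shiftE l Z)"
  have shifted_out: "r + l \<notin> shiftE l Z" if "r \<notin> Z" for r
    using that by (auto simp: shiftE_def)
  with w show "(\<lambda>r. w (r + l)) \<in> Afun Z"
    by (simp add: Afun_def)
  have below_out: "r \<notin> shiftE l Z" if "r < l" for r
    using that by (auto simp: shiftE_def)
  with w show "(\<lambda>r. if l \<le> r then w (r - l + l) else 0) = w"
    by (auto simp: Afun_def fun_eq_iff not_le)
next
  fix u :: "nat \<Rightarrow> 'a" assume "u \<in> Afun Z"
  then show "(\<lambda>r. if l \<le> r then u (r - l) else 0) \<in> Afun (shiftE l Z)"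
    by (auto simp: Afun_def shiftE_def image_iff) (metis le_add_diff_inverse2)
qed simp_all

lemma unshiftE_shiftE [simp]: "unshiftE l (shiftE l Z) = Z"
  by (simp add: unshiftE_def shiftE_def image_image)

lemma finite_hyperedge: "H \<in> hypergraphs l \<Longrightarrow> X \<in> H \<Longrightarrow> finite X"
  unfolding hypergraphs_def by (blast intro: finite_subset[OF _ finite_lessThan])

lemma hmap_in_GW: "x \<in> GC l \<Longrightarrow> hmap x \<in> GW l"
  by (cases x) (auto simp: GC_def GW_def hmap_def weight_def)

lemma weight_GCmap:
  fixes \<rho> :: "('a::{comm_monoid_add,finite}, 'm::comm_monoid_add) calib"
  assumes "\<And>X. X \<in> H \<Longrightarrow> finite X"
  shows "weight (GCmap f (H, \<rho>)) Y = (\<Sum>X\<in>{X\<in>H. f ` X = Y}. weight (H, \<rho>) X)"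
proof -
  have "weight (GCmap f (H, \<rho>)) Y
      = (\<Sum>X\<in>{X\<in>H. f ` X = Y}. \<Sum>v\<in>Afun Y. fpush f X (\<rho> X) v)"
    unfolding GCmap_def weight_def by (simp add: sum.swap[of _ "Afun Y"])
  also have "\<dots> = (\<Sum>X\<in>{X\<in>H. f ` X = Y}. weight (H, \<rho>) X)"
    using assms by (intro sum.cong) (auto simp: sum_fpush_Afun weight_def)
  finally show ?thesis .
qed

lemma hmap_GCmap:
  fixes x :: "nat set set \<times> ('a::{comm_monoid_add,finite}, 'm::comm_monoid_add) calib"
  assumes "x \<in> GC l"
  shows "hmap (GCmap f x) = GWmap f (hmap x)"
proof -
  obtain H \<rho> where x: "x = (H, \<rho>)" and H: "H \<in> hypergraphs l"
    using assms by (auto simp: GC_def)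
  have "fst (GCmap f x) = Gmap f H"
    by (simp add: x GCmap_def)
  then show ?thesis
    by (simp add: x hmap_def GWmap_def weight_GCmap[OF finite_hyperedge[OF H]] fun_eq_iff)
qed

lemma weight_GCprod:
  fixes \<rho> \<sigma> :: "('a::{comm_monoid_add,finite}, 'm::comm_monoid_add) calib"
  shows "weight (GCprod l (H, \<rho>) (K, \<sigma>)) X
    = (if X \<in> H then weight (H, \<rho>) X
       else if X \<in> shiftE l ` K then weight (K, \<sigma>) (unshiftE l X) else 0)"
proof (cases "X \<notin> H \<and> X \<in> shiftE l ` K")
  case True
  then obtain Z where Z: "X = shiftE l Z" by auto
  have "weight (GCprod l (H, \<rho>) (K, \<sigma>)) X = (\<Sum>w\<in>Afun X. \<sigma> Z (\<lambda>r. w (r + l)))"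
    using True Z by (auto simp: GCprod_def weight_def intro: sum.cong)
  also have "\<dots> = weight (K, \<sigma>) Z"
    using Z by (simp add: sum_Afun_shiftE weight_def)
  finally show ?thesis
    using True Z by simp
qed (auto simp: GCprod_def weight_def)

lemma hmap_GCprod:
  fixes x y :: "nat set set \<times> ('a::{comm_monoid_add,finite}, 'm::comm_monoid_add) calib"
  shows "hmap (GCprod l x y) = GWprod l (hmap x) (hmap y)"
proof -
  obtain H \<rho> K \<sigma> where x: "x = (H, \<rho>)" and y: "y = (K, \<sigma>)"
    by (cases x, cases y)
  have "fst (GCprod l x y) = Gcup l H K"
    by (simp add: x y GCprod_def)
  then show ?thesis
    by (simp add: x y hmap_def GWprod_def weight_GCprod fun_eq_iff)
qed

lemma hmap_GCunit: "hmap GCunit = GWunit"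
  by (simp add: hmap_def GCunit_def GWunit_def weight_def fun_eq_iff)

theorem proposition3p43:
  shows "graded_monad_morphism
           (GC :: nat \<Rightarrow> (nat set set \<times> ('a::{comm_monoid_add,finite},'m::{comm_monoid_add,finite}) calib) set)
           GCmap GCprod GCunit
           GW GWmap GWprod GWunit
           (\<lambda>l. hmap)"
  unfolding graded_monad_morphism_def
  by (auto intro: hmap_in_GW hmap_GCmap simp: hmap_GCprod hmap_GCunit)

end
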